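(* Let $d\geq1$, $s\in(0,1)$, and let $\Omega\subseteq\mathbb{R}^d$ be open and bounded. For any $x^0\in\Omega\cup(\mathbb{R}^d\setminus\overline\Omega)$ and any $\lambda\in\mathbb{R}^d$ there exists $\varphi\in C_c^\infty(\Omega)$ such that $\nabla^s\varphi(x^0)=\lambda$.
   Context: For $\varphi\in C_c^\infty(\mathbb{R}^d)$ the fractional gradient is $\nabla^s\varphi(x)=\mu_s\int_{\mathbb{R}^d}\frac{(\varphi(x)-\varphi(y))(x-y)}{|x-y|^{d+s+1}}\,dy$, $x\in\mathbb{R}^d$, with $\mu_s=2^s\pi^{-d/2}\frac{\Gamma((d+s+1)/2)}{\Gamma((1-s)/2)}$. *)

theory Defs
  imports "HOL-Analysis.Analysis"
begin

fun Ck :: "nat \<Rightarrow> ('a::euclidean_space \<Rightarrow> real) \<Rightarrow> bool" where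
  "Ck 0 f = continuous_on UNIV f"
| "Ck (Suc k) f = (f differentiable_on UNIV \<and>
      (\<forall>v. Ck k (\<lambda>x. frechet_derivative f (at x) v)))"

definition smooth_fun :: "('a::euclidean_space \<Rightarrow> real) \<Rightarrow> bool" where
  "smooth_fun f \<longleftrightarrow> (\<forall>k. Ck k f)"

definition tsupport :: "('a::euclidean_space \<Rightarrow> real) \<Rightarrow> 'a set" where
  "tsupport f = closure {x. f x \<noteq> 0}"

definition Cc_inf :: "'a::euclidean_space set \<Rightarrow> ('a \<Rightarrow> real) set" where
  "Cc_inf \<Omega> = {f. smooth_fun f \<and> compact (tsupport f) \<and> tsupport f \<subseteq> \<Omega>}"

definition mu_s :: "real \<Rightarrow> nat \<Rightarrow> real" where
  "mu_s s d = 2 powr s * pi powr (- real d / 2) *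
     Gamma ((real d + s + 1) / 2) / Gamma ((1 - s) / 2)"

definition frac_grad :: "real \<Rightarrow> ('a::euclidean_space \<Rightarrow> real) \<Rightarrow> 'a \<Rightarrow> 'a" where
  "frac_grad s f x = mu_s s DIM('a) *\<^sub>R
     (LINT y|lborel. ((f x - f y) / norm (x - y) powr (real DIM('a) + s + 1)) *\<^sub>R (x - y))"

end

theory Submission
  imports Defs "HOL-Computational_Algebra.Polynomial"
begin

text \<open>For \<open>\<phi>\<close> supported away from \<open>x0\<close>, the integral defining \<open>\<nabla>\<^sup>s\<phi>(x0)\<close> is an
  ordinary Lebesgue integral and is linear in \<open>\<phi>\<close>, so the values \<open>\<nabla>\<^sup>s\<phi>(x0)\<close> for
  \<open>\<phi> \<in> C\<^sub>c\<^sup>\<infinity>(\<Omega> - {x0})\<close> form a linear subspace of \<open>\<real>\<^sup>d\<close>. If it were proper, some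
  \<open>e \<noteq> 0\<close> would be orthogonal to it. But take a nonnegative bump \<open>\<phi>\<close> supported in a
  small ball on which \<open>e \<bullet> (x0 - y)\<close> has a fixed sign: then
  \<open>e \<bullet> \<nabla>\<^sup>s\<phi>(x0) = - \<mu>\<^sub>s \<integral> \<phi>(y) e \<bullet> (x0 - y) / |x0 - y|\<^sup>d\<^sup>+\<^sup>s\<^sup>+\<^sup>1 dy\<close> integrates a
  function of fixed sign that is nonzero at the centre of the ball, so it does not vanish.\<close>

section \<open>The smooth function \<open>t \<mapsto> p(1/t) e\<^sup>-\<^sup>1\<^sup>/\<^sup>t\<close>\<close>

definition poly_exp_recip :: "real poly \<Rightarrow> real \<Rightarrow> real" where
  "poly_exp_recip p t = (if t > 0 then poly p (inverse t) * exp (- inverse t) else 0)"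

text \<open>For \<open>t > 0\<close> the derivative of \<open>p(1/t) e\<^sup>-\<^sup>1\<^sup>/\<^sup>t\<close> is \<open>t\<^sup>-\<^sup>2 (p(1/t) - p'(1/t)) e\<^sup>-\<^sup>1\<^sup>/\<^sup>t\<close>.\<close>
definition poly_exp_recip_deriv :: "real poly \<Rightarrow> real poly" where
  "poly_exp_recip_deriv p = [:0, 0, 1:] * (p - pderiv p)"

lemma tendsto_poly_times_exp_neg_at_top:
  "((\<lambda>u::real. poly q u * exp (- u)) \<longlongrightarrow> 0) at_top"
proof -
  have "((\<lambda>u. \<Sum>i\<le>degree q. coeff q i * (u ^ i / exp u)) \<longlongrightarrow> (\<Sum>i\<le>degree q. coeff q i * 0)) at_top"
    by (intro tendsto_intros tendsto_power_div_exp_0)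
  moreover have "(\<lambda>u. \<Sum>i\<le>degree q. coeff q i * (u ^ i / exp u)) = (\<lambda>u. poly q u * exp (- u))"
    by (auto simp: poly_altdef sum_distrib_right exp_minus divide_inverse mult.assoc)
  ultimately show ?thesis by simp
qed

lemma tendsto_poly_exp_recip_at_right_0:
  "((\<lambda>t. poly q (inverse t) * exp (- inverse t)) \<longlongrightarrow> 0) (at_right (0::real))"
  using filterlim_compose[OF tendsto_poly_times_exp_neg_at_top filterlim_inverse_at_top_right]
  by (simp add: o_def)

lemma poly_exp_recip_has_real_derivative_pos:
  assumes "t > 0"
  shows "(poly_exp_recip p has_real_derivative poly_exp_recip (poly_exp_recip_deriv p) t) (at t)"
proof -
  let ?f = "\<lambda>t. poly p (inverse t) * exp (- inverse t)"
  have eq: "\<forall>\<^sub>F y in nhds t. ?f y = poly_exp_recip p y"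
    using eventually_nhds_in_open[of "{0<..}" t] assms
    by (auto elim!: eventually_mono simp: poly_exp_recip_def)
  have "(?f has_real_derivative
      poly (pderiv p) (inverse t) * (- inverse (t^2)) * exp (- inverse t)
      + poly p (inverse t) * (exp (- inverse t) * inverse (t^2))) (at t)"
    using assms
    by (auto intro!: derivative_eq_intros DERIV_chain2[OF poly_DERIV]
        simp: power2_eq_square field_simps)
  moreover have "poly (pderiv p) (inverse t) * (- inverse (t^2)) * exp (- inverse t)
      + poly p (inverse t) * (exp (- inverse t) * inverse (t^2))
      = poly_exp_recip (poly_exp_recip_deriv p) t"
    using assms
    by (simp add: poly_exp_recip_def poly_exp_recip_deriv_def power2_eq_square field_simps)
  ultimately show ?thesis
    using DERIV_cong_ev[OF refl eq refl] by simp
qed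

lemma poly_exp_recip_has_real_derivative_neg:
  assumes "t < 0"
  shows "(poly_exp_recip p has_real_derivative poly_exp_recip (poly_exp_recip_deriv p) t) (at t)"
proof -
  have eq: "\<forall>\<^sub>F y in nhds t. (\<lambda>_. 0) y = poly_exp_recip p y"
    using eventually_nhds_in_open[of "{..<0}" t] assms
    by (auto elim!: eventually_mono simp: poly_exp_recip_def)
  have "((\<lambda>_. 0) has_real_derivative 0) (at t)" by simp
  then show ?thesis
    using DERIV_cong_ev[OF refl eq refl] assms by (simp add: poly_exp_recip_def[abs_def])
qed

lemma poly_exp_recip_has_real_derivative_0:
  "(poly_exp_recip p has_real_derivative poly_exp_recip (poly_exp_recip_deriv p) 0) (at 0)"
proof -
  let ?dq = "\<lambda>y. (poly_exp_recip p y - poly_exp_recip p 0) / (y - 0)"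
  have "(?dq \<longlongrightarrow> 0) (at_left 0)"
    by (rule tendsto_eventually)
      (auto simp: poly_exp_recip_def eventually_at_left_field intro: exI[of _ "-1"])
  moreover have "\<forall>\<^sub>F y in at_right 0. poly (pCons 0 p) (inverse y) * exp (- inverse y) = ?dq y"
    by (auto simp: poly_exp_recip_def eventually_at_right_field field_simps intro!: exI[of _ 1])
  then have "(?dq \<longlongrightarrow> 0) (at_right 0)"
    using tendsto_cong tendsto_poly_exp_recip_at_right_0 by fastforce
  ultimately show ?thesis
    by (simp add: has_field_derivative_iff filterlim_at_split poly_exp_recip_def)
qed

lemma poly_exp_recip_has_real_derivative:
  "(poly_exp_recip p has_real_derivative poly_exp_recip (poly_exp_recip_deriv p) t) (at t)"
  using poly_exp_recip_has_real_derivative_pos poly_exp_recip_has_real_derivative_neg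
    poly_exp_recip_has_real_derivative_0
  by (metis linorder_neqE_linordered_idom)

section \<open>Smoothness and test functions\<close>

lemma Ck_Suc_imp_Ck: "Ck (Suc k) f \<Longrightarrow> Ck k f"
proof (induction k arbitrary: f)
  case 0
  then show ?case by (auto intro: differentiable_imp_continuous_on)
next
  case (Suc k)
  then show ?case by (metis Ck.simps(2))
qed

lemma Ck_const: "Ck k (\<lambda>x. c)"
proof (induction k arbitrary: c)
  case 0
  then show ?case by simp
next
  case (Suc k)
  have "frechet_derivative (\<lambda>x. c) (at x) = (\<lambda>v. 0)" for x :: 'a
    by (metis frechet_derivative_at has_derivative_const)
  then show ?case using Suc by simp
qed

lemma Ck_add: "Ck k f \<Longrightarrow> Ck k g \<Longrightarrow> Ck k (\<lambda>x. f x + g x)"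
proof (induction k arbitrary: f g)
  case 0
  then show ?case by (auto intro: continuous_on_add)
next
  case (Suc k)
  have df: "f differentiable at x" "g differentiable at x" for x
    using Suc.prems by (auto simp: differentiable_on_def)
  have "frechet_derivative (\<lambda>x. f x + g x) (at x) =
      (\<lambda>v. frechet_derivative f (at x) v + frechet_derivative g (at x) v)" for x
    by (rule frechet_derivative_at[symmetric], rule has_derivative_add)
      (use df frechet_derivative_works in blast)+
  then show ?case using Suc df
    by (auto simp: differentiable_on_def intro!: differentiable_add)
qed

lemma Ck_mult: "Ck k f \<Longrightarrow> Ck k g \<Longrightarrow> Ck k (\<lambda>x. f x * g x)"
proof (induction k arbitrary: f g)
  case 0
  then show ?case by (auto intro: continuous_on_mult)
next
  case (Suc k)
  have df: "f differentiable at x" "g differentiable at x" for x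
    using Suc.prems by (auto simp: differentiable_on_def)
  have "frechet_derivative (\<lambda>x. f x * g x) (at x) =
      (\<lambda>v. f x * frechet_derivative g (at x) v + frechet_derivative f (at x) v * g x)" for x
    by (rule frechet_derivative_at[symmetric], rule has_derivative_mult)
      (use df frechet_derivative_works in blast)+
  moreover have "Ck k (\<lambda>x. f x * frechet_derivative g (at x) v + frechet_derivative f (at x) v * g x)"
    for v
    using Suc.prems Ck_Suc_imp_Ck[OF Suc.prems(1)] Ck_Suc_imp_Ck[OF Suc.prems(2)]
    by (intro Ck_add Suc.IH) auto
  ultimately show ?case using Suc df
    by (auto simp: differentiable_on_def intro!: differentiable_mult)
qed

lemma Ck_cmult: "Ck k f \<Longrightarrow> Ck k (\<lambda>x. c * f x)"
  using Ck_mult[OF Ck_const] by blast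

lemma Ck_inner_left: "Ck k (\<lambda>x. a \<bullet> x)"
proof (cases k)
  case 0
  then show ?thesis by (simp add: continuous_on_inner continuous_on_const continuous_on_id)
next
  case (Suc m)
  have "frechet_derivative (\<lambda>x. a \<bullet> x) (at x) = (\<lambda>v. a \<bullet> v)" for x :: 'a
    by (rule frechet_derivative_at[symmetric])
      (rule bounded_linear_imp_has_derivative, rule bounded_linear_inner_right)
  moreover have "(\<lambda>x. a \<bullet> x) differentiable_on UNIV"
    by (simp add: differentiable_on_def bounded_linear_imp_differentiable bounded_linear_inner_right)
  ultimately show ?thesis using Suc by (simp add: Ck_const)
qed

lemma Ck_ball_quadratic: "Ck k (\<lambda>y. r\<^sup>2 - (y - c) \<bullet> (y - c))"
proof (cases k)
  case 0
  have "continuous_on UNIV (\<lambda>y. r\<^sup>2 - (y - c) \<bullet> (y - c))"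
    by (intro continuous_intros)
  then show ?thesis using 0 by simp
next
  case (Suc m)
  have D: "((\<lambda>y. r\<^sup>2 - (y - c) \<bullet> (y - c)) has_derivative
      (\<lambda>v. (-2) * (v \<bullet> y) + 2 * (c \<bullet> v))) (at y)" for y
    by (auto intro!: derivative_eq_intros simp: inner_diff_left inner_diff_right inner_commute)
  have "frechet_derivative (\<lambda>y. r\<^sup>2 - (y - c) \<bullet> (y - c)) (at y) v = (-2) * (v \<bullet> y) + 2 * (c \<bullet> v)"
    for y v
    using frechet_derivative_at[OF D, symmetric] by simp
  moreover have "Ck m (\<lambda>y. (-2) * (v \<bullet> y) + 2 * (c \<bullet> v))" for v
    by (intro Ck_add Ck_cmult Ck_inner_left Ck_const)
  moreover have "(\<lambda>y. r\<^sup>2 - (y - c) \<bullet> (y - c)) differentiable_on UNIV"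
    using D by (auto simp: differentiable_on_def differentiable_def)
  ultimately show ?thesis using Suc by simp
qed

lemma Ck_poly_exp_recip_compose:
  assumes "\<And>k. Ck k q"
  shows "Ck k (\<lambda>x. poly_exp_recip p (q x))"
proof (induction k arbitrary: p)
  case 0
  have "continuous_on UNIV q" using assms[of 0] by simp
  moreover have "continuous_on UNIV (poly_exp_recip p)"
    by (meson DERIV_isCont poly_exp_recip_has_real_derivative continuous_at_imp_continuous_on)
  ultimately show ?case by (auto intro: continuous_on_compose2)
next
  case (Suc k)
  have dq: "q differentiable at x" for x
    using assms[of 1] by (auto simp: differentiable_on_def)
  have D: "((\<lambda>x. poly_exp_recip p (q x)) has_derivative
      (\<lambda>v. poly_exp_recip (poly_exp_recip_deriv p) (q x) * frechet_derivative q (at x) v)) (at x)"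
    for x
    using diff_chain_at[OF frechet_derivative_works[THEN iffD1, OF dq]
        poly_exp_recip_has_real_derivative[unfolded has_field_derivative_def]]
    by (simp add: o_def)
  have "frechet_derivative (\<lambda>x. poly_exp_recip p (q x)) (at x) =
      (\<lambda>v. poly_exp_recip (poly_exp_recip_deriv p) (q x) * frechet_derivative q (at x) v)" for x
    using frechet_derivative_at[OF D] by simp
  moreover have "Ck k (\<lambda>x. poly_exp_recip (poly_exp_recip_deriv p) (q x) * frechet_derivative q (at x) v)"
    for v
    using assms[of "Suc k"] by (intro Ck_mult Suc.IH) auto
  moreover have "(\<lambda>x. poly_exp_recip p (q x)) differentiable_on UNIV"
    using D by (auto simp: differentiable_on_def differentiable_def)
  ultimately show ?case by simp
qed

definition bump :: "'a::euclidean_space \<Rightarrow> real \<Rightarrow> 'a \<Rightarrow> real" where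
  "bump c r y = poly_exp_recip 1 (r\<^sup>2 - (y - c) \<bullet> (y - c))"

lemma smooth_fun_bump: "smooth_fun (bump c r)"
  unfolding smooth_fun_def bump_def using Ck_poly_exp_recip_compose[OF Ck_ball_quadratic] by blast

lemma bump_nonneg: "bump c r y \<ge> 0"
  by (simp add: bump_def poly_exp_recip_def)

lemma bump_centre_pos: "r > 0 \<Longrightarrow> bump c r c > 0"
  by (simp add: bump_def poly_exp_recip_def)

lemma tsupport_bump:
  assumes "r > 0"
  shows "tsupport (bump c r) \<subseteq> cball c r"
proof -
  have "norm (y - c) < r" if "bump c r y \<noteq> 0" for y
  proof -
    from that have "norm (y - c) ^ 2 < r ^ 2"
      by (auto simp: bump_def poly_exp_recip_def power2_norm_eq_inner split: if_splits)
    then show ?thesis using assms by (simp add: power_less_imp_less_base)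
  qed
  then have "{y. bump c r y \<noteq> 0} \<subseteq> ball c r"
    by (auto simp: dist_norm norm_minus_commute)
  then show ?thesis
    unfolding tsupport_def using ball_subset_cball closure_minimal by blast
qed

lemma compact_tsupport_subset: "compact K \<Longrightarrow> tsupport f \<subseteq> K \<Longrightarrow> compact (tsupport f)"
  by (metis compact_Int_closed closed_closure inf.absorb2 tsupport_def)

lemma notin_tsupport_imp_eq_0: "x \<notin> tsupport f \<Longrightarrow> f x = 0"
  using closure_subset[of "{x. f x \<noteq> 0}"] by (auto simp: tsupport_def)

lemma smooth_fun_imp_continuous_on: "smooth_fun f \<Longrightarrow> continuous_on UNIV f"
  by (metis Ck.simps(1) smooth_fun_def)

lemma Cc_inf_mono: "U \<subseteq> V \<Longrightarrow> Cc_inf U \<subseteq> Cc_inf V"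
  by (auto simp: Cc_inf_def)

lemma Cc_inf_zero: "(\<lambda>_. 0) \<in> Cc_inf U"
  by (simp add: Cc_inf_def smooth_fun_def Ck_const tsupport_def)

lemma Cc_inf_add:
  assumes "\<phi> \<in> Cc_inf U" "\<psi> \<in> Cc_inf U"
  shows "(\<lambda>y. \<phi> y + \<psi> y) \<in> Cc_inf U"
proof -
  have supp: "tsupport (\<lambda>y. \<phi> y + \<psi> y) \<subseteq> tsupport \<phi> \<union> tsupport \<psi>"
    unfolding tsupport_def closure_Un[symmetric] by (rule closure_mono) auto
  moreover have "compact (tsupport \<phi> \<union> tsupport \<psi>)"
    using assms by (auto simp: Cc_inf_def)
  ultimately have "compact (tsupport (\<lambda>y. \<phi> y + \<psi> y))"
    by (rule compact_tsupport_subset[rotated])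
  with supp assms show ?thesis
    by (auto simp: Cc_inf_def smooth_fun_def intro: Ck_add)
qed

lemma Cc_inf_cmult:
  assumes "\<phi> \<in> Cc_inf U"
  shows "(\<lambda>y. a * \<phi> y) \<in> Cc_inf U"
proof -
  have "tsupport (\<lambda>y. a * \<phi> y) \<subseteq> tsupport \<phi>"
    unfolding tsupport_def by (rule closure_mono) auto
  moreover have "compact (tsupport \<phi>)"
    using assms by (simp add: Cc_inf_def)
  ultimately show ?thesis
    using assms compact_tsupport_subset[of "tsupport \<phi>" "\<lambda>y. a * \<phi> y"]
    by (auto simp: Cc_inf_def smooth_fun_def intro: Ck_cmult)
qed

lemma bump_in_Cc_inf: "r > 0 \<Longrightarrow> cball c r \<subseteq> U \<Longrightarrow> bump c r \<in> Cc_inf U"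
  using smooth_fun_bump tsupport_bump[of r c] compact_tsupport_subset[OF compact_cball]
  by (auto simp: Cc_inf_def)

lemma integral_lborel_pos:
  fixes h :: "'a::euclidean_space \<Rightarrow> real"
  assumes "integrable lborel h" "\<And>x. h x \<ge> 0" "isCont h c" "h c > 0"
  shows "integral\<^sup>L lborel h > 0"
proof (rule ccontr)
  assume "\<not> integral\<^sup>L lborel h > 0"
  moreover have "integral\<^sup>L lborel h \<ge> 0"
    using assms(2) by simp
  ultimately have "integral\<^sup>L lborel h = 0"
    by simp
  then have "AE x in lborel. h x = 0"
    using integral_nonneg_eq_0_iff_AE[OF assms(1)] assms(2) by simp
  then obtain N where N: "{x. h x \<noteq> 0} \<subseteq> N" "emeasure lborel N = 0" "N \<in> sets lborel"
    by (auto elim: AE_E)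
  obtain d where "d > 0" and d: "\<And>y. dist y c < d \<Longrightarrow> dist (h y) (h c) < h c"
    using assms(3,4) unfolding continuous_at_eps_delta by metis
  have "ball c d \<subseteq> N"
    using d N(1) by (force simp: dist_real_def dist_commute)
  then have "emeasure lborel (ball c d) = 0"
    using emeasure_mono[OF _ N(3)] N(2) by (metis le_zero_eq)
  moreover have "emeasure lborel (ball c d) > 0"
    using \<open>d > 0\<close> by (simp add: emeasure_ball)
  ultimately show False
    by simp
qed

lemma obtain_cball_inner_sign:
  fixes e x0 :: "'a::euclidean_space"
  assumes "open U" "U \<noteq> {}" "e \<noteq> 0"
  obtains c r where "r > 0" "cball c r \<subseteq> U"
    "\<And>y. y \<in> cball c r \<Longrightarrow> 0 < (e \<bullet> (x0 - c)) * (e \<bullet> (x0 - y))"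
proof -
  obtain z \<delta> where "\<delta> > 0" "ball z \<delta> \<subseteq> U"
    using assms(1,2) open_contains_ball by blast
  define c where "c = (if e \<bullet> (x0 - z) \<noteq> 0 then z else z - (\<delta> / (2 * norm e)) *\<^sub>R e)"
  have "c \<in> ball z \<delta>"
    using \<open>\<delta> > 0\<close> assms(3) by (simp add: c_def dist_norm)
  have "e \<bullet> (x0 - c) \<noteq> 0"
    using \<open>\<delta> > 0\<close> assms(3)
    by (simp add: c_def algebra_simps power2_norm_eq_inner[symmetric])
  define V where "V = ball z \<delta> \<inter> {y. 0 < (e \<bullet> (x0 - c)) * (e \<bullet> (x0 - y))}"
  have "open V"
    unfolding V_def by (intro open_Int open_ball open_Collect_less continuous_intros)
  moreover have "c \<in> V"
    using \<open>c \<in> ball z \<delta>\<close> \<open>e \<bullet> (x0 - c) \<noteq> 0\<close> by (auto simp: V_def zero_less_mult_iff neq_iff)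
  ultimately obtain r where "r > 0" "cball c r \<subseteq> V"
    using open_contains_cball by blast
  show ?thesis
  proof (rule that[OF \<open>r > 0\<close>])
    show "cball c r \<subseteq> U"
      using \<open>cball c r \<subseteq> V\<close> \<open>ball z \<delta> \<subseteq> U\<close> unfolding V_def by blast
    show "0 < (e \<bullet> (x0 - c)) * (e \<bullet> (x0 - y))" if "y \<in> cball c r" for y
      using \<open>cball c r \<subseteq> V\<close> that unfolding V_def by blast
  qed
qed

lemma subspace_eq_UNIV_if_not_orthogonal:
  fixes V :: "'a::euclidean_space set"
  assumes "subspace V" "\<And>e. e \<noteq> 0 \<Longrightarrow> \<exists>v\<in>V. e \<bullet> v \<noteq> 0"
  shows "V = UNIV"
proof (rule ccontr)
  assume "V \<noteq> UNIV"
  then have "span V \<subset> span UNIV"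
    unfolding span_UNIV span_eq_iff[THEN iffD2, OF assms(1)] by auto
  then obtain e where "e \<noteq> 0" "\<And>v. v \<in> span V \<Longrightarrow> orthogonal e v"
    by (meson orthogonal_to_subspace_exists_gen)
  with assms(2) show False
    by (meson span_base orthogonal_def)
qed

section \<open>The fractional gradient away from the support\<close>

lemma mu_s_pos: "0 < s \<Longrightarrow> s < 1 \<Longrightarrow> mu_s s d > 0"
  unfolding mu_s_def by (intro divide_pos_pos mult_pos_pos Gamma_real_pos) auto

lemma integrable_frac_grad_integrand:
  fixes \<phi> :: "'a::euclidean_space \<Rightarrow> real"
  assumes "\<phi> \<in> Cc_inf U" "x0 \<notin> U"
  shows "integrable lborel (\<lambda>y. ((\<phi> x0 - \<phi> y) / norm (x0 - y) powr q) *\<^sub>R (x0 - y))"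
    (is "integrable lborel ?G")
proof -
  let ?K = "tsupport \<phi>"
  have K: "compact ?K" "x0 \<notin> ?K"
    using assms by (auto simp: Cc_inf_def)
  have "continuous_on ?K \<phi>"
    using assms(1) smooth_fun_imp_continuous_on continuous_on_subset
    unfolding Cc_inf_def by blast
  moreover have "\<forall>y\<in>?K. norm (x0 - y) \<noteq> 0"
    using K(2) by auto
  ultimately have "continuous_on ?K ?G"
    by (intro continuous_intros) auto
  then have "integrable lborel (\<lambda>y. indicator ?K y *\<^sub>R ?G y)"
    by (rule borel_integrable_compact[OF K(1)])
  moreover have "(\<lambda>y. indicator ?K y *\<^sub>R ?G y) = ?G"
  proof
    fix y
    show "indicator ?K y *\<^sub>R ?G y = ?G y"
      using K(2) notin_tsupport_imp_eq_0[of y \<phi>] notin_tsupport_imp_eq_0[of x0 \<phi>]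
      by (cases "y \<in> ?K") simp_all
  qed
  ultimately show ?thesis
    by simp
qed

lemma frac_grad_add:
  assumes "\<phi> \<in> Cc_inf U" "\<psi> \<in> Cc_inf U" "x0 \<notin> U"
  shows "frac_grad s (\<lambda>y. \<phi> y + \<psi> y) x0 = frac_grad s \<phi> x0 + frac_grad s \<psi> x0"
proof -
  let ?p = "real DIM('a) + s + 1"
  have "((\<phi> x0 + \<psi> x0 - (\<phi> y + \<psi> y)) / norm (x0 - y) powr ?p) *\<^sub>R (x0 - y) =
      ((\<phi> x0 - \<phi> y) / norm (x0 - y) powr ?p) *\<^sub>R (x0 - y) +
      ((\<psi> x0 - \<psi> y) / norm (x0 - y) powr ?p) *\<^sub>R (x0 - y)" for y
    by (simp add: diff_divide_distrib add_divide_distrib algebra_simps)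
  then show ?thesis
    using integrable_frac_grad_integrand[OF assms(1,3)] integrable_frac_grad_integrand[OF assms(2,3)]
    by (simp add: frac_grad_def scaleR_add_right)
qed

lemma frac_grad_cmult: "frac_grad s (\<lambda>y. a * \<phi> y) x0 = a *\<^sub>R frac_grad s \<phi> x0"
proof -
  have "((a * \<phi> x0 - a * \<phi> y) / q) *\<^sub>R v = a *\<^sub>R (((\<phi> x0 - \<phi> y) / q) *\<^sub>R v)"
    for y q and v :: 'a
    by (simp add: right_diff_distrib[symmetric])
  then show ?thesis
    by (simp only: frac_grad_def integral_scaleR_right scaleR_left_commute)
qed

lemma subspace_frac_grad_image:
  assumes "x0 \<notin> U"
  shows "subspace ((\<lambda>\<phi>. frac_grad s \<phi> x0) ` Cc_inf U)"
  unfolding subspace_def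
proof (intro conjI ballI allI)
  have "0 = frac_grad s (\<lambda>_. 0) x0"
    by (simp add: frac_grad_def)
  then show "0 \<in> (\<lambda>\<phi>. frac_grad s \<phi> x0) ` Cc_inf U"
    using Cc_inf_zero by (rule image_eqI)
next
  fix u v
  assume "u \<in> (\<lambda>\<phi>. frac_grad s \<phi> x0) ` Cc_inf U" "v \<in> (\<lambda>\<phi>. frac_grad s \<phi> x0) ` Cc_inf U"
  then obtain \<phi> \<psi> where \<phi>: "\<phi> \<in> Cc_inf U" "u = frac_grad s \<phi> x0"
    and \<psi>: "\<psi> \<in> Cc_inf U" "v = frac_grad s \<psi> x0"
    by blast
  then have "u + v = frac_grad s (\<lambda>y. \<phi> y + \<psi> y) x0"
    by (simp add: frac_grad_add[OF _ _ assms])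
  then show "u + v \<in> (\<lambda>\<phi>. frac_grad s \<phi> x0) ` Cc_inf U"
    using Cc_inf_add[OF \<phi>(1) \<psi>(1)] by (rule image_eqI)
next
  fix a :: real and u
  assume "u \<in> (\<lambda>\<phi>. frac_grad s \<phi> x0) ` Cc_inf U"
  then obtain \<phi> where \<phi>: "\<phi> \<in> Cc_inf U" "u = frac_grad s \<phi> x0"
    by blast
  then have "a *\<^sub>R u = frac_grad s (\<lambda>y. a * \<phi> y) x0"
    by (simp add: frac_grad_cmult)
  then show "a *\<^sub>R u \<in> (\<lambda>\<phi>. frac_grad s \<phi> x0) ` Cc_inf U"
    using Cc_inf_cmult[OF \<phi>(1)] by (rule image_eqI)
qed

lemma inner_frac_grad_outside_support:
  fixes \<phi> :: "'a::euclidean_space \<Rightarrow> real" and e :: 'a and s :: real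
  assumes "\<phi> \<in> Cc_inf U" "x0 \<notin> U"
  defines "f \<equiv> \<lambda>y. \<phi> y * (e \<bullet> (x0 - y)) / norm (x0 - y) powr (real DIM('a) + s + 1)"
  shows "integrable lborel f" "e \<bullet> frac_grad s \<phi> x0 = - mu_s s DIM('a) * integral\<^sup>L lborel f"
proof -
  define G where "G y = ((\<phi> x0 - \<phi> y) / norm (x0 - y) powr (real DIM('a) + s + 1)) *\<^sub>R (x0 - y)"
    for y
  have "\<phi> x0 = 0"
    using assms(1,2) notin_tsupport_imp_eq_0 by (auto simp: Cc_inf_def)
  then have f_eq: "f = (\<lambda>y. - (e \<bullet> G y))"
    by (auto simp: f_def G_def fun_eq_iff)
  have int_G: "integrable lborel G"
    unfolding G_def using integrable_frac_grad_integrand[OF assms(1,2)] .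
  then show "integrable lborel f"
    unfolding f_eq by (intro integrable_minus integrable_inner_right)
  have "frac_grad s \<phi> x0 = mu_s s DIM('a) *\<^sub>R integral\<^sup>L lborel G"
    by (simp add: frac_grad_def G_def[abs_def])
  moreover have "integral\<^sup>L lborel f = - (e \<bullet> integral\<^sup>L lborel G)"
    using int_G by (simp add: f_eq)
  ultimately show "e \<bullet> frac_grad s \<phi> x0 = - mu_s s DIM('a) * integral\<^sup>L lborel f"
    by simp
qed

lemma frac_grad_Cc_inf_not_orthogonal:
  fixes U :: "'a::euclidean_space set"
  assumes "0 < s" "s < 1" "open U" "U \<noteq> {}" "x0 \<notin> U" "e \<noteq> 0"
  shows "\<exists>\<phi>\<in>Cc_inf U. e \<bullet> frac_grad s \<phi> x0 \<noteq> 0"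
proof -
  obtain c r where "r > 0" "cball c r \<subseteq> U"
    and sign: "\<And>y. y \<in> cball c r \<Longrightarrow> 0 < (e \<bullet> (x0 - c)) * (e \<bullet> (x0 - y))"
    using obtain_cball_inner_sign[OF assms(3,4,6)] by blast
  define \<phi> where "\<phi> = bump c r"
  define f where "f y = \<phi> y * (e \<bullet> (x0 - y)) / norm (x0 - y) powr (real DIM('a) + s + 1)" for y
  define h where "h y = (e \<bullet> (x0 - c)) * f y" for y
  have \<phi>: "\<phi> \<in> Cc_inf U"
    unfolding \<phi>_def using \<open>r > 0\<close> \<open>cball c r \<subseteq> U\<close> by (rule bump_in_Cc_inf)
  note f = inner_frac_grad_outside_support[OF \<phi> assms(5), of e s, folded f_def[abs_def]]
  have "integrable lborel h"
    unfolding h_def using f(1) by (rule integrable_mult_right)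
  moreover have "h y \<ge> 0" for y
  proof (cases "y \<in> cball c r")
    case True
    then have "0 \<le> bump c r y * ((e \<bullet> (x0 - c)) * (e \<bullet> (x0 - y)))"
      using sign[OF True] bump_nonneg[of c r y] by simp
    then show ?thesis
      unfolding h_def f_def \<phi>_def by (simp add: mult.left_commute)
  next
    case False
    then have "y \<notin> tsupport \<phi>"
      using tsupport_bump[OF \<open>r > 0\<close>, of c] unfolding \<phi>_def by blast
    then show ?thesis
      by (simp add: h_def f_def notin_tsupport_imp_eq_0)
  qed
  moreover have "x0 \<noteq> c"
    using \<open>r > 0\<close> \<open>cball c r \<subseteq> U\<close> assms(5) by (meson centre_in_cball less_imp_le subsetD)
  then have "isCont h c"
    using smooth_fun_imp_continuous_on[OF smooth_fun_bump]
    unfolding h_def f_def \<phi>_def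
    by (intro continuous_intros) (auto simp: continuous_on_eq_continuous_at)
  moreover have "0 < bump c r c * ((e \<bullet> (x0 - c)) * (e \<bullet> (x0 - c)))"
    using \<open>r > 0\<close> by (intro mult_pos_pos[OF bump_centre_pos] sign) auto
  with \<open>x0 \<noteq> c\<close> have "h c > 0"
    unfolding h_def f_def \<phi>_def by (simp add: mult.left_commute)
  ultimately have "integral\<^sup>L lborel h > 0"
    by (rule integral_lborel_pos)
  then have "(e \<bullet> (x0 - c)) * integral\<^sup>L lborel f \<noteq> 0"
    by (auto simp: h_def[abs_def] zero_less_mult_iff)
  then have "(e \<bullet> (x0 - c)) * (e \<bullet> frac_grad s \<phi> x0) \<noteq> 0"
    using f(2) mu_s_pos[OF assms(1,2), of "DIM('a)"] by simp
  with \<phi> show ?thesis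
    by auto
qed

lemma frac_grad_Cc_inf_image_eq_UNIV:
  fixes U :: "'a::euclidean_space set"
  assumes "0 < s" "s < 1" "open U" "U \<noteq> {}" "x0 \<notin> U"
  shows "(\<lambda>\<phi>. frac_grad s \<phi> x0) ` Cc_inf U = UNIV"
  using subspace_frac_grad_image[OF assms(5)] frac_grad_Cc_inf_not_orthogonal[OF assms]
  by (intro subspace_eq_UNIV_if_not_orthogonal) auto

theorem lemma2p12:
  fixes \<Omega> :: "'a::euclidean_space set" and s :: real and x0 lam :: 'a
  assumes "0 < s" "s < 1" "open \<Omega>" "bounded \<Omega>" "\<Omega> \<noteq> {}"
    and "x0 \<in> \<Omega> \<union> (- closure \<Omega>)"
  shows "\<exists>\<phi> \<in> Cc_inf \<Omega>. frac_grad s \<phi> x0 = lam"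
proof -
  have "\<Omega> - {x0} \<noteq> {}"
    using assms(3,5) not_open_singleton by (metis Diff_eq_empty_iff subset_singletonD)
  then have "lam \<in> (\<lambda>\<phi>. frac_grad s \<phi> x0) ` Cc_inf (\<Omega> - {x0})"
    using frac_grad_Cc_inf_image_eq_UNIV[OF assms(1,2) open_delete[OF assms(3)]] by blast
  then show ?thesis
    using Cc_inf_mono[of "\<Omega> - {x0}" \<Omega>] by blast
qed

end
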